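(* Let $\Gamma=(V,E)$ be a simple, acyclic, modular directed graph and let $F\subseteq E$ be a complete connected set of edges. Let $u,v\in V(F)$ be such that there is no directed path in $\Gamma(F)$ from $u$ to $v$. Then (1) there exists an edge $f\in F$ with $t(f)=v$, and (2) there exists an edge $e\in F$ with $h(e)=u$.
   Context: Each edge $e$ has tail $t(e)$ and head $h(e)$; simple means edges with the same tail and head coincide; acyclic means no directed path of positive length from a vertex to itself. A directed path is $e_1,\dots,e_k$ with $t(e_{i+1})=h(e_i)$; a vertex is joined to itself by the path of length $0$. $\Gamma$ is modular if for any two distinct edges $e_1,e_2$ with a common tail there exist edges $f_1,f_2$ with a common head and $h(e_i)=t(f_i)$, and for any two distinct edges $h_1,h_2$ with a common head there exist edges $g_1,g_2$ with a common tail and $h(g_i)=t(h_i)$. D-operation: from distinct edges $e_1,e_2$ with a common tail, any pair $f_1,f_2$ with a common head and $h(e_i)=t(f_i)$ is obtained; U-operation: from distinct edges $f_1',f_2'$ with a common head, any pair $e_1',e_2'$ with a common tail and $h(e_i')=t(f_i')$ is obtained. $F$ is complete if all results of D- and U-operations applied to edges of $F$ lie in $F$. $V(F)$ is the set of heads and tails of edges of $F$, and $\Gamma(F)$ is the subgraph with vertex set $V(F)$ and edge set $F$. $F$ is connected if the undirected graph underlying $\Gamma(F)$ is connected. *)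

theory Defs
  imports Main
begin

text \<open>A simple directed graph is given by a vertex set V and an edge set
E \<subseteq> V \<times> V; an edge e is the pair (t e, h e), i.e. tail = fst, head = snd.
Simplicity (edges with same tail and head coincide) is built into this encoding.\<close>

definition tl_e :: "'a \<times> 'a \<Rightarrow> 'a" where "tl_e e = fst e"
definition hd_e :: "'a \<times> 'a \<Rightarrow> 'a" where "hd_e e = snd e"

definition modular :: "('a \<times> 'a) set \<Rightarrow> bool" where
  "modular E \<longleftrightarrow>
     (\<forall>e1\<in>E. \<forall>e2\<in>E. e1 \<noteq> e2 \<and> tl_e e1 = tl_e e2 \<longrightarrow>
        (\<exists>f1\<in>E. \<exists>f2\<in>E. hd_e f1 = hd_e f2 \<and> hd_e e1 = tl_e f1 \<and> hd_e e2 = tl_e f2)) \<and>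
     (\<forall>h1\<in>E. \<forall>h2\<in>E. h1 \<noteq> h2 \<and> hd_e h1 = hd_e h2 \<longrightarrow>
        (\<exists>g1\<in>E. \<exists>g2\<in>E. tl_e g1 = tl_e g2 \<and> hd_e g1 = tl_e h1 \<and> hd_e g2 = tl_e h2))"

definition complete_edges :: "('a \<times> 'a) set \<Rightarrow> ('a \<times> 'a) set \<Rightarrow> bool" where
  "complete_edges E F \<longleftrightarrow>
     (\<forall>e1\<in>F. \<forall>e2\<in>F. e1 \<noteq> e2 \<and> tl_e e1 = tl_e e2 \<longrightarrow>
        (\<forall>f1\<in>E. \<forall>f2\<in>E. hd_e f1 = hd_e f2 \<and> hd_e e1 = tl_e f1 \<and> hd_e e2 = tl_e f2
            \<longrightarrow> f1 \<in> F \<and> f2 \<in> F)) \<and>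
     (\<forall>f1\<in>F. \<forall>f2\<in>F. f1 \<noteq> f2 \<and> hd_e f1 = hd_e f2 \<longrightarrow>
        (\<forall>e1\<in>E. \<forall>e2\<in>E. tl_e e1 = tl_e e2 \<and> hd_e e1 = tl_e f1 \<and> hd_e e2 = tl_e f2
            \<longrightarrow> e1 \<in> F \<and> e2 \<in> F))"

definition VF :: "('a \<times> 'a) set \<Rightarrow> 'a set" where
  "VF F = tl_e ` F \<union> hd_e ` F"

definition connected_edges :: "('a \<times> 'a) set \<Rightarrow> bool" where
  "connected_edges F \<longleftrightarrow> (\<forall>x\<in>VF F. \<forall>y\<in>VF F. (x, y) \<in> (F \<union> F\<inverse>)\<^sup>*)"

definition dpath :: "('a \<times> 'a) set \<Rightarrow> 'a \<Rightarrow> 'a \<Rightarrow> bool" where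
  "dpath F u v \<longleftrightarrow> (u, v) \<in> F\<^sup>*"

end

theory Submission
  imports Defs
begin

text \<open>Suppose no edge of F leaves v. If a reaches v in \<Gamma>(F) and (a,b) is an edge of F,
then b reaches v too: if b is not the next vertex y on a path from a to v, the D-operation
applied to the fork (a,b), (a,y) gives edges (b,z), (y,z) of F, and z reaches v by induction
along the path. Hence along an undirected path from u to v every vertex reaches v,
so u does, contrary to the hypothesis. The claim about u is the dual one, obtained by
reversing all edges, which preserves modularity and completeness.\<close>

lemma modular_iff:
  "modular E \<longleftrightarrow>
     (\<forall>a b c. (a, b) \<in> E \<and> (a, c) \<in> E \<and> b \<noteq> c \<longrightarrow> (\<exists>z. (b, z) \<in> E \<and> (c, z) \<in> E)) \<and>
     (\<forall>a b c. (b, a) \<in> E \<and> (c, a) \<in> E \<and> b \<noteq> c \<longrightarrow> (\<exists>z. (z, b) \<in> E \<and> (z, c) \<in> E))"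
  unfolding modular_def tl_e_def hd_e_def
  by (simp add: Ball_def Bex_def split_paired_All split_paired_Ex) blast

lemma complete_edges_iff:
  "complete_edges E F \<longleftrightarrow>
     (\<forall>a b c z. (a, b) \<in> F \<and> (a, c) \<in> F \<and> b \<noteq> c \<and> (b, z) \<in> E \<and> (c, z) \<in> E
        \<longrightarrow> (b, z) \<in> F \<and> (c, z) \<in> F) \<and>
     (\<forall>a b c z. (b, a) \<in> F \<and> (c, a) \<in> F \<and> b \<noteq> c \<and> (z, b) \<in> E \<and> (z, c) \<in> E
        \<longrightarrow> (z, b) \<in> F \<and> (z, c) \<in> F)"
  unfolding complete_edges_def tl_e_def hd_e_def by (simp add: Ball_def split_paired_All) blast

lemma modular_converse: "modular (E\<inverse>) \<longleftrightarrow> modular E"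
  unfolding modular_iff by blast

lemma complete_edges_converse: "complete_edges (E\<inverse>) (F\<inverse>) \<longleftrightarrow> complete_edges E F"
  unfolding complete_edges_iff by blast

lemma complete_modular_fork_closes:
  assumes "modular E" "F \<subseteq> E" "complete_edges E F"
    and "(a, b) \<in> F" "(a, c) \<in> F" "b \<noteq> c"
  obtains z where "(b, z) \<in> F" "(c, z) \<in> F"
proof -
  obtain z where "(b, z) \<in> E" "(c, z) \<in> E"
    using assms(1,2,4-6) unfolding modular_iff by blast
  then show thesis
    using assms(3-6) that unfolding complete_edges_iff by blast
qed

lemma reaches_sink_from_successor:
  assumes "modular E" "F \<subseteq> E" "complete_edges E F" "v \<notin> fst ` F"
    and "(a, v) \<in> F\<^sup>*" "(a, b) \<in> F"
  shows "(b, v) \<in> F\<^sup>*"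
  using assms(5,6)
proof (induction arbitrary: b rule: converse_rtrancl_induct)
  case base
  then show ?case using assms(4) by force
next
  case (step a y)
  show ?case
  proof (cases "b = y")
    case True
    then show ?thesis using step.hyps(2) by simp
  next
    case False
    then obtain z where "(b, z) \<in> F" "(y, z) \<in> F"
      using complete_modular_fork_closes[OF assms(1-3) step.prems step.hyps(1)] by blast
    then show ?thesis using step.IH by (meson converse_rtrancl_into_rtrancl)
  qed
qed

lemma reaches_sink_if_connected:
  assumes "modular E" "F \<subseteq> E" "complete_edges E F" "v \<notin> fst ` F"
    and "(u, v) \<in> (F \<union> F\<inverse>)\<^sup>*"
  shows "(u, v) \<in> F\<^sup>*"
  using assms(5)
proof (induction rule: converse_rtrancl_induct)
  case base
  then show ?case by simp
next
  case (step x y)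
  then consider "(x, y) \<in> F" | "(y, x) \<in> F" by blast
  then show ?case
  proof cases
    case 1
    then show ?thesis using step.IH by simp
  next
    case 2
    then show ?thesis using reaches_sink_from_successor[OF assms(1-4) step.IH] by simp
  qed
qed

lemma reached_from_source_if_connected:
  assumes "modular E" "F \<subseteq> E" "complete_edges E F" "u \<notin> snd ` F"
    and "(u, v) \<in> (F \<union> F\<inverse>)\<^sup>*"
  shows "(u, v) \<in> F\<^sup>*"
proof -
  have "(v, u) \<in> (F \<union> F\<inverse>)\<^sup>*"
    using assms(5) by (meson sym_Un_converse sym_rtrancl symD)
  then have "(v, u) \<in> (F\<inverse> \<union> (F\<inverse>)\<inverse>)\<^sup>*"
    by (simp add: Un_commute)
  moreover have "u \<notin> fst ` F\<inverse>"
    using assms(4) by force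
  ultimately have "(v, u) \<in> (F\<inverse>)\<^sup>*"
    using reaches_sink_if_connected[of "E\<inverse>" "F\<inverse>"] assms(1-3)
    by (simp add: modular_converse complete_edges_converse converse_mono)
  then show ?thesis
    by (simp add: rtrancl_converse)
qed

theorem lemma3p2p5:
  fixes V :: "'a set" and E F :: "('a \<times> 'a) set" and u v :: 'a
  assumes "E \<subseteq> V \<times> V"
    and "acyclic E"
    and "modular E"
    and "F \<subseteq> E"
    and "complete_edges E F"
    and "connected_edges F"
    and "u \<in> VF F" and "v \<in> VF F"
    and "\<not> dpath F u v"
  shows "(\<exists>f\<in>F. tl_e f = v) \<and> (\<exists>e\<in>F. hd_e e = u)"
proof -
  have connected: "(u, v) \<in> (F \<union> F\<inverse>)\<^sup>*"
    using assms(6-8) unfolding connected_edges_def by blast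
  have no_path: "(u, v) \<notin> F\<^sup>*"
    using assms(9) unfolding dpath_def .
  have "v \<in> fst ` F"
    using reaches_sink_if_connected[OF assms(3-5) _ connected] no_path by blast
  moreover have "u \<in> snd ` F"
    using reached_from_source_if_connected[OF assms(3-5) _ connected] no_path by blast
  ultimately show ?thesis
    unfolding tl_e_def hd_e_def by blast
qed

end
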